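(* Let $k\geq 2$ and $0\leq\ell\leq k-1$ be integers and let $G=(V,E)$ be a graph. Let $X_1,X_2\subseteq V$. Let $\sim$ be a symmetric binary relation on $V$ such that (a) for every $u\in V$ and $v\in X_1$, $v$ has at most $\Delta_1$ neighbours $w\in X_2$, and at most $s_1$ of them satisfy $u\sim w$; (b) for every $u\in V$ and $v\in X_2$, $v$ has at most $\Delta_2$ neighbours $w\in X_1$, and at most $s_2$ of them satisfy $u\sim w$. Let $M=\max(\Delta_1s_2,\Delta_2s_1)$. Then the number of homomorphic $2k$-cycles $(x_1,\dots,x_{2k})\in(X_1\times X_2\times X_1\times\dots\times X_2)\cup(X_2\times X_1\times X_2\times\dots\times X_1)$ in $G$ such that $x_i\sim x_j$ for some $i\neq j$ is at most $$32k^{3/2}M^{1/2}\hom(C_{2\ell},G)^{\frac{1}{2(k-\ell)}}\hom(C_{2k},G)^{1-\frac{1}{2(k-\ell)}}.$$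
   Context: A homomorphic $2k$-cycle in $G$ is a tuple $(x_1,\dots,x_{2k})\in V^{2k}$ with $x_ix_{i+1}\in E$ for all $i$, indices modulo $2k$. $\hom(H,G)$ is the number of homomorphisms from $H$ to $G$. Conventions: $C_0$ is the one-vertex graph (so $\hom(C_0,G)=|V|$) and $C_2$ is a single edge. *)

theory Defs
  imports Complex_Main "HOL-Library.FuncSet"
begin

definition graph :: "'a set \<Rightarrow> ('a \<Rightarrow> 'a \<Rightarrow> bool) \<Rightarrow> bool" where
  "graph V E \<longleftrightarrow> finite V \<and> (\<forall>x y. E x y \<longrightarrow> x \<in> V \<and> y \<in> V)
     \<and> (\<forall>x y. E x y \<longrightarrow> E y x) \<and> (\<forall>x. \<not> E x x)"

definition hom_cycles :: "'a set \<Rightarrow> ('a \<Rightarrow> 'a \<Rightarrow> bool) \<Rightarrow> nat \<Rightarrow> (nat \<Rightarrow> 'a) set" where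
  "hom_cycles V E n = {x \<in> {0..<n} \<rightarrow>\<^sub>E V. \<forall>i<n. E (x i) (x (Suc i mod n))}"

text \<open>hom(C_n, G); C_0 is the one-vertex graph, so hom(C_0,G) = |V|;
C_2 is a single edge (for n = 2 the formula counts ordered edges, = 2|E|).\<close>
definition hom_C :: "'a set \<Rightarrow> ('a \<Rightarrow> 'a \<Rightarrow> bool) \<Rightarrow> nat \<Rightarrow> nat" where
  "hom_C V E n = (if n = 0 then card V else card (hom_cycles V E n))"

end

theory Submission
  imports Defs "HOL-Analysis.Convex" "HOL-Analysis.L2_Norm"
begin

text \<open>
  Let w_m(z, y) be the number of walks of length m from z to y. Cutting a closed walk of length
  m1 + m2 at the positions 0 and m1 shows that hom(C_(m1+m2), G) is the sum over z, y of
  w_m1(z, y) w_m2(z, y). Hence h_j = hom(C_2j, G) is the sum of the squares w_j(z, y)^2, and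
  Cauchy-Schwarz makes h log-convex, which gives
  sqrt(h_(k-1) h_k) \<le> h_l^(1/(2(k-l))) h_k^(1-1/(2(k-l))).

  Up to a factor 2k for the choice of a rotation, a bad cycle may be assumed anchored: x_k is related
  to some x_t with t < k, and by alternation (x_(k-1), x_k) lies in X1 \<times> X2 or X2 \<times> X1. An anchored
  cycle is a walk of length k - 1 from x_0 to x_(k-1), one of at most k s neighbours x_k of x_(k-1)
  related to an earlier vertex, and a walk of length k from x_0 to x_k. Cauchy-Schwarz, once over
  x_k and once over the pair (x_0, x_(k-1)), together with the degree bound \<Delta> for the vertices x_k,
  bounds the number of anchored cycles by sqrt(k s \<Delta>) sqrt(h_(k-1) h_k). The argument gives the
  constant 4.
\<close>

section \<open>Two consequences of Cauchy-Schwarz\<close>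

lemma sum_mult_le_sqrt_sum_squares:
  fixes f g :: "'b \<Rightarrow> real"
  shows "(\<Sum>i\<in>I. f i * g i) \<le> sqrt (\<Sum>i\<in>I. (f i)\<^sup>2) * sqrt (\<Sum>i\<in>I. (g i)\<^sup>2)"
proof -
  have "(\<Sum>i\<in>I. f i * g i) \<le> (\<Sum>i\<in>I. \<bar>f i\<bar> * \<bar>g i\<bar>)"
    by (intro sum_mono) (simp flip: abs_mult)
  also have "\<dots> \<le> L2_set f I * L2_set g I" by (rule L2_set_mult_ineq)
  finally show ?thesis by (simp add: L2_set_def)
qed

lemma sum_subset_le_sqrt_card_mult:
  fixes f :: "'b \<Rightarrow> real" and c :: real
  assumes "finite S" "T \<subseteq> S" "card T \<le> c"
  shows "(\<Sum>w\<in>T. f w) \<le> sqrt c * sqrt (\<Sum>w\<in>S. (f w)\<^sup>2)"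
proof -
  have "(\<Sum>w\<in>T. f w) = (\<Sum>w\<in>T. 1 * f w)" by simp
  also have "\<dots> \<le> sqrt (\<Sum>w\<in>T. 1\<^sup>2) * sqrt (\<Sum>w\<in>T. (f w)\<^sup>2)" by (rule sum_mult_le_sqrt_sum_squares)
  also have "\<dots> \<le> sqrt c * sqrt (\<Sum>w\<in>S. (f w)\<^sup>2)"
    using assms by (intro mult_mono real_sqrt_le_mono sum_mono2) (auto intro: sum_nonneg)
  finally show ?thesis .
qed

lemma sum_neighbourhoods_le:
  fixes f :: "'a \<Rightarrow> real"
  assumes "finite A" "finite B" and sym: "\<And>a b. E a b \<Longrightarrow> E b a"
    and deg: "\<forall>w\<in>B. card {v\<in>A. E w v} \<le> \<Delta>" and nonneg: "\<And>w. 0 \<le> f w"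
  shows "(\<Sum>v\<in>A. \<Sum>w\<in>{w\<in>B. E v w}. f w) \<le> \<Delta> * (\<Sum>w\<in>B. f w)"
proof -
  have "(\<Sum>v\<in>A. \<Sum>w\<in>{w\<in>B. E v w}. f w) = (\<Sum>w\<in>B. \<Sum>v\<in>{v\<in>A. E v w}. f w)"
    using assms(1,2) by (rule sum.swap_restrict)
  also have "\<dots> \<le> (\<Sum>w\<in>B. \<Delta> * f w)"
  proof (intro sum_mono)
    fix w assume "w \<in> B"
    moreover have "{v\<in>A. E v w} = {v\<in>A. E w v}" using sym by blast
    ultimately have "card {v\<in>A. E v w} \<le> \<Delta>" using deg by simp
    then show "(\<Sum>v\<in>{v\<in>A. E v w}. f w) \<le> \<Delta> * f w" using nonneg[of w] by (simp add: mult_right_mono)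
  qed
  finally show ?thesis by (simp add: sum_distrib_left)
qed

section \<open>Log-convex sequences\<close>

lemma log_convex_ratio_mono:
  fixes h :: "nat \<Rightarrow> real"
  assumes pos: "\<And>j. 0 < h j" and lc: "\<And>j. (h (Suc j))\<^sup>2 \<le> h j * h (Suc (Suc j))" and "i \<le> j"
  shows "h (Suc i) / h i \<le> h (Suc j) / h j"
proof (rule lift_Suc_mono_le[OF _ \<open>i \<le> j\<close>])
  fix n
  show "h (Suc n) / h n \<le> h (Suc (Suc n)) / h (Suc n)"
    using lc[of n] pos[of n] pos[of "Suc n"] by (simp add: divide_simps power2_eq_square mult.commute)
qed

lemma log_convex_interpolation:
  fixes h :: "nat \<Rightarrow> real"
  assumes pos: "\<And>j. 0 < h j" and lc: "\<And>j. (h (Suc j))\<^sup>2 \<le> h j * h (Suc (Suc j))" and "l < k"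
  shows "h (k - 1) ^ (k - l) \<le> h l * h k ^ (k - l - 1)"
proof -
  define \<rho> where "\<rho> = h k / h (k - 1)"
  have \<rho>_pos: "0 < \<rho>" using pos by (simp add: \<rho>_def)
  have growth: "h (l + n) \<le> h l * \<rho> ^ n" if "l + n \<le> k" for n
    using that
  proof (induction n)
    case (Suc n)
    have "h (l + Suc n) = h (l + n) * (h (Suc (l + n)) / h (l + n))" using pos[of "l + n"] by simp
    also have "\<dots> \<le> (h l * \<rho> ^ n) * \<rho>"
      using Suc log_convex_ratio_mono[of h, OF pos lc, of "l + n" "k - 1"] \<rho>_pos
        pos[of l] pos[of "l + n"] pos[of "Suc (l + n)"] by (intro mult_mono) (auto simp: \<rho>_def)
    finally show ?case by (simp add: ac_simps)
  qed simp
  have "h k * h (k - 1) ^ (k - l) \<le> h l * h k ^ (k - l)"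
    using growth[of "k - l"] \<open>l < k\<close> pos[of k] pos[of "k - 1"]
    by (simp add: \<rho>_def divide_simps power_divide)
  also have "h k ^ (k - l) = h k * h k ^ (k - l - 1)" using \<open>l < k\<close> by (simp flip: power_Suc add: Suc_diff_Suc)
  finally show ?thesis using pos[of k] by (simp add: algebra_simps)
qed

lemma log_convex_sqrt_bound:
  fixes h :: "nat \<Rightarrow> real"
  assumes pos: "\<And>j. 0 < h j" and lc: "\<And>j. (h (Suc j))\<^sup>2 \<le> h j * h (Suc (Suc j))" and "l < k"
  defines "\<alpha> \<equiv> 1 / (2 * (real k - real l))"
  shows "sqrt (h (k - 1)) * sqrt (h k) \<le> h l powr \<alpha> * h k powr (1 - \<alpha>)"
proof -
  define D where "D = k - l"
  have D: "1 \<le> D" "real k - real l = real D" using \<open>l < k\<close> by (auto simp: D_def)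
  have "h (k - 1) = (h (k - 1) ^ D) powr (1 / D)"
    using pos[of "k - 1"] D by (simp add: powr_realpow[symmetric] powr_powr)
  also have "\<dots> \<le> (h l * h k ^ (D - 1)) powr (1 / D)"
    using log_convex_interpolation[of h, OF pos lc \<open>l < k\<close>] pos[of "k - 1"]
    by (intro powr_mono2) (auto simp: D_def)
  also have "\<dots> = h l powr (1 / D) * h k powr ((D - 1) / D)"
    using pos[of l] pos[of k] D by (simp add: powr_mult powr_realpow[symmetric] powr_powr of_nat_diff)
  finally have "h (k - 1) \<le> h l powr (1 / D) * h k powr ((D - 1) / D)" .
  then have "sqrt (h (k - 1)) \<le> sqrt (h l powr (1 / D) * h k powr ((D - 1) / D))"
    by (rule real_sqrt_le_mono)
  also have "\<dots> = h l powr (1 / (2 * D)) * h k powr ((D - 1) / (2 * D))"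
    by (simp add: real_sqrt_mult powr_half_sqrt[symmetric] powr_powr ac_simps)
  finally have "sqrt (h (k - 1)) * sqrt (h k)
      \<le> h l powr (1 / (2 * D)) * h k powr ((D - 1) / (2 * D)) * h k powr (1 / 2)"
    using pos[of k] by (simp add: powr_half_sqrt mult_right_mono)
  also have "\<dots> = h l powr \<alpha> * h k powr (1 - \<alpha>)"
    using D by (simp add: \<alpha>_def powr_add[symmetric] mult.assoc diff_divide_distrib add_divide_distrib)
  finally show ?thesis .
qed

section \<open>Walks and homomorphic cycles\<close>

definition walks :: "'a set \<Rightarrow> ('a \<Rightarrow> 'a \<Rightarrow> bool) \<Rightarrow> nat \<Rightarrow> 'a \<Rightarrow> 'a \<Rightarrow> (nat \<Rightarrow> 'a) set" where
  "walks V E m z y = {p \<in> {0..m} \<rightarrow>\<^sub>E V. p 0 = z \<and> p m = y \<and> (\<forall>i<m. E (p i) (p (Suc i)))}"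

definition reversed_tail :: "nat \<Rightarrow> nat \<Rightarrow> (nat \<Rightarrow> 'a) \<Rightarrow> nat \<Rightarrow> 'a" where
  "reversed_tail n m x = (\<lambda>i\<in>{0..m}. x ((n - i) mod n))"

definition glue_walks :: "nat \<Rightarrow> nat \<Rightarrow> (nat \<Rightarrow> 'a) \<Rightarrow> (nat \<Rightarrow> 'a) \<Rightarrow> nat \<Rightarrow> 'a" where
  "glue_walks m1 m2 p q = (\<lambda>i\<in>{0..<m1 + m2}. if i \<le> m1 then p i else q (m1 + m2 - i))"

lemma finite_walks: "finite V \<Longrightarrow> finite (walks V E m z y)"
  unfolding walks_def by (rule finite_subset[OF _ finite_PiE[of "{0..m}"]]) auto

lemma finite_hom_cycles: "finite V \<Longrightarrow> finite (hom_cycles V E n)"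
  unfolding hom_cycles_def by (rule finite_subset[OF _ finite_PiE[of "{0..<n}"]]) auto

lemma hom_cyclesD:
  assumes "x \<in> hom_cycles V E n" and "i < n"
  shows "x i \<in> V" and "E (x i) (x (Suc i mod n))"
  using assms unfolding hom_cycles_def by auto

lemma card_walks_0: "z \<in> V \<Longrightarrow> card (walks V E 0 z y) = (if z = y then 1 else 0)"
proof -
  assume "z \<in> V"
  then have "walks V E 0 z y = (if z = y then {\<lambda>i\<in>{0}. z} else {})"
    by (auto simp: walks_def PiE_def extensional_def fun_eq_iff)
  then show ?thesis by simp
qed

lemma restrict_hom_cycle_in_walks:
  assumes x: "x \<in> hom_cycles V E n" and "m < n"
  shows "restrict x {0..m} \<in> walks V E m (x 0) (x m)"
proof -
  have "E (x i) (x (Suc i))" if "i < m" for i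
    using hom_cyclesD(2)[OF x, of i] that \<open>m < n\<close> by simp
  then show ?thesis using hom_cyclesD(1)[OF x] \<open>m < n\<close> by (auto simp: walks_def)
qed

lemma reversed_tail_in_walks:
  assumes sym: "\<And>a b. E a b \<Longrightarrow> E b a" and x: "x \<in> hom_cycles V E n" and "m \<le> n" "0 < n"
  shows "reversed_tail n m x \<in> walks V E m (x 0) (x ((n - m) mod n))"
proof -
  have "E (x ((n - i) mod n)) (x ((n - Suc i) mod n))" if "i < m" for i
  proof -
    have "(n - i) mod n = Suc (n - Suc i) mod n" using that \<open>m \<le> n\<close> by (simp add: Suc_diff_Suc)
    moreover have "(n - Suc i) mod n = n - Suc i" using that \<open>m \<le> n\<close> by simp
    ultimately show ?thesis using hom_cyclesD(2)[OF x, of "n - Suc i"] sym that \<open>m \<le> n\<close> by simp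
  qed
  then show ?thesis using hom_cyclesD(1)[OF x] \<open>0 < n\<close> by (auto simp: walks_def reversed_tail_def)
qed

lemma glue_walks_in_hom_cycles:
  assumes sym: "\<And>a b. E a b \<Longrightarrow> E b a" and p: "p \<in> walks V E m1 z y" and q: "q \<in> walks V E m2 z y"
    and "0 < m2"
  shows "glue_walks m1 m2 p q \<in> hom_cycles V E (m1 + m2)"
proof -
  let ?n = "m1 + m2" and ?x = "glue_walks m1 m2 p q"
  have x: "?x i = (if i \<le> m1 then p i else q (?n - i))" if "i < ?n" for i
    using that by (simp add: glue_walks_def)
  have "E (?x i) (?x (Suc i mod ?n))" if i: "i < ?n" for i
  proof (cases "i < m1")
    case True
    then show ?thesis using p x i \<open>0 < m2\<close> by (simp add: walks_def)
  next
    case False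
    have "?x i = q (Suc (?n - Suc i))" using False x[OF i] p q i by (auto simp: walks_def Suc_diff_Suc)
    moreover have "?x (Suc i mod ?n) = q (?n - Suc i)"
    proof (cases "Suc i < ?n")
      case True then show ?thesis using False x by simp
    next
      case False then have "Suc i = ?n" using i by simp
      then show ?thesis using x[of 0] p q \<open>0 < m2\<close> by (simp add: walks_def)
    qed
    moreover have "?n - Suc i < m2" using False i by simp
    ultimately show ?thesis using q sym by (simp add: walks_def)
  qed
  moreover have "?x \<in> {0..<?n} \<rightarrow>\<^sub>E V" using p q by (force simp: glue_walks_def walks_def PiE_iff)
  ultimately show ?thesis by (simp add: hom_cycles_def)
qed

lemma restrict_glue_walks:
  assumes "p \<in> walks V E m1 z y" and "0 < m2"
  shows "restrict (glue_walks m1 m2 p q) {0..m1} = p"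
  using assms by (auto simp: glue_walks_def walks_def PiE_def extensional_def fun_eq_iff)

lemma reversed_tail_glue_walks:
  assumes p: "p \<in> walks V E m1 z y" and q: "q \<in> walks V E m2 z y" and "0 < m2"
  shows "reversed_tail (m1 + m2) m2 (glue_walks m1 m2 p q) = q"
proof
  fix i
  let ?n = "m1 + m2"
  consider "i = 0" | "i = m2" | "0 < i" "i < m2" | "m2 < i" by linarith
  then show "reversed_tail ?n m2 (glue_walks m1 m2 p q) i = q i"
  proof cases
    case 1 then show ?thesis using p q \<open>0 < m2\<close> by (simp add: reversed_tail_def glue_walks_def walks_def)
  next
    case 2 then show ?thesis using p q \<open>0 < m2\<close> by (simp add: reversed_tail_def glue_walks_def walks_def)
  next
    case 3
    then have "(?n - i) mod ?n = ?n - i" "\<not> ?n - i \<le> m1" by auto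
    then show ?thesis using 3 by (simp add: reversed_tail_def glue_walks_def)
  next
    case 4
    have "q i = undefined" using q 4 by (intro PiE_arb[of q "{0..m2}" "\<lambda>_. V"]) (auto simp: walks_def)
    then show ?thesis using 4 by (simp add: reversed_tail_def)
  qed
qed

lemma inj_on_restrict_reversed_tail:
  assumes "n \<le> m1 + m2 + 1"
  shows "inj_on (\<lambda>x. (restrict x {0..m1}, reversed_tail n m2 x)) (hom_cycles V E n)"
proof
  fix x y assume x: "x \<in> hom_cycles V E n" and y: "y \<in> hom_cycles V E n"
    and eq: "(restrict x {0..m1}, reversed_tail n m2 x) = (restrict y {0..m1}, reversed_tail n m2 y)"
  show "x = y"
  proof
    fix i
    consider "i \<le> m1" | "m1 < i" "i < n" | "n \<le> i" by linarith
    then show "x i = y i"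
    proof cases
      case 1 then show ?thesis using fun_cong[OF arg_cong[OF eq, of fst], of i] by simp
    next
      case 2
      then have "n - i \<le> m2" "(n - (n - i)) mod n = i" using assms by auto
      then show ?thesis using fun_cong[OF arg_cong[OF eq, of snd], of "n - i"]
        by (simp add: reversed_tail_def)
    next
      case 3
      have "x \<in> {0..<n} \<rightarrow>\<^sub>E V" "y \<in> {0..<n} \<rightarrow>\<^sub>E V" using x y by (simp_all add: hom_cycles_def)
      then show ?thesis using 3 PiE_arb[of x] PiE_arb[of y] by simp
    qed
  qed
qed

lemma card_hom_cycles_split:
  assumes G: "graph V E" and "0 < m2"
  shows "card (hom_cycles V E (m1 + m2))
    = (\<Sum>z\<in>V. \<Sum>y\<in>V. card (walks V E m1 z y) * card (walks V E m2 z y))"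
proof -
  let ?n = "m1 + m2"
  have sym: "\<And>a b. E a b \<Longrightarrow> E b a" and fin: "finite V" using G by (auto simp: graph_def)
  define F where "F x = (x 0, x m1, restrict x {0..m1}, reversed_tail ?n m2 x)" for x :: "nat \<Rightarrow> 'a"
  define T where "T = (SIGMA z:V. SIGMA y:V. walks V E m1 z y \<times> walks V E m2 z y)"
  have "inj_on F (hom_cycles V E ?n)"
    using inj_on_restrict_reversed_tail[of ?n m1 m2 V E] by (auto simp: inj_on_def F_def)
  moreover have "F ` hom_cycles V E ?n = T"
  proof
    show "F ` hom_cycles V E ?n \<subseteq> T"
    proof
      fix t assume "t \<in> F ` hom_cycles V E ?n"
      then obtain x where x: "x \<in> hom_cycles V E ?n" and t: "t = F x" by blast
      have "(?n - m2) mod ?n = m1" using \<open>0 < m2\<close> by simp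
      then show "t \<in> T"
        using restrict_hom_cycle_in_walks[OF x, of m1] reversed_tail_in_walks[OF sym x, of m2]
          hom_cyclesD(1)[OF x] \<open>0 < m2\<close> by (auto simp: T_def F_def t)
    qed
    show "T \<subseteq> F ` hom_cycles V E ?n"
    proof
      fix t assume "t \<in> T"
      then obtain z y p q where t: "t = (z, y, p, q)"
        and p: "p \<in> walks V E m1 z y" and q: "q \<in> walks V E m2 z y"
        by (auto simp: T_def)
      let ?x = "glue_walks m1 m2 p q"
      have prefix: "restrict ?x {0..m1} = p" by (rule restrict_glue_walks[OF p \<open>0 < m2\<close>])
      have "?x 0 = z" "?x m1 = y" using fun_cong[OF prefix, of 0] fun_cong[OF prefix, of m1] p
        by (auto simp: walks_def)
      then have "t = F ?x"
        using prefix reversed_tail_glue_walks[OF p q \<open>0 < m2\<close>]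
        by (simp add: t F_def)
      then show "t \<in> F ` hom_cycles V E ?n"
        using glue_walks_in_hom_cycles[OF sym p q \<open>0 < m2\<close>] by blast
    qed
  qed
  ultimately have "card (hom_cycles V E ?n) = card T" by (metis card_image)
  also have "\<dots> = (\<Sum>z\<in>V. \<Sum>y\<in>V. card (walks V E m1 z y) * card (walks V E m2 z y))"
    unfolding T_def using fin by (simp add: card_SigmaI finite_walks card_cartesian_product)
  finally show ?thesis .
qed

definition hom_even :: "'a set \<Rightarrow> ('a \<Rightarrow> 'a \<Rightarrow> bool) \<Rightarrow> nat \<Rightarrow> real" where
  "hom_even V E j = real (hom_C V E (2 * j))"

lemma hom_even_eq_sum_walks_sq:
  assumes G: "graph V E"
  shows "hom_even V E j = (\<Sum>z\<in>V. \<Sum>y\<in>V. (real (card (walks V E j z y)))\<^sup>2)"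
proof (cases "j = 0")
  case True
  have "(\<Sum>z\<in>V. \<Sum>y\<in>V. (real (card (walks V E 0 z y)))\<^sup>2) = (\<Sum>z\<in>V. \<Sum>y\<in>V. if z = y then 1 else 0)"
    by (intro sum.cong refl) (simp add: card_walks_0)
  also have "\<dots> = real (card V)" using G by (simp add: graph_def)
  finally show ?thesis using True by (simp add: hom_even_def hom_C_def)
next
  case False
  then have "hom_C V E (2 * j) = card (hom_cycles V E (j + j))" by (simp add: hom_C_def mult_2)
  then show ?thesis using card_hom_cycles_split[OF G, of j j] False
    by (simp add: hom_even_def power2_eq_square)
qed

lemma hom_even_log_convex:
  assumes G: "graph V E"
  shows "(hom_even V E (Suc j))\<^sup>2 \<le> hom_even V E j * hom_even V E (Suc (Suc j))"
proof -
  let ?w = "\<lambda>m (z, y). real (card (walks V E m z y))"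
  have "hom_C V E (2 * Suc j) = card (hom_cycles V E (j + Suc (Suc j)))" by (simp add: hom_C_def mult_2)
  then have "hom_even V E (Suc j) = (\<Sum>zy\<in>V \<times> V. ?w j zy * ?w (Suc (Suc j)) zy)"
    using card_hom_cycles_split[OF G, of "Suc (Suc j)" j]
    by (simp add: hom_even_def sum.cartesian_product case_prod_beta)
  also have "(\<dots>)\<^sup>2 \<le> (\<Sum>zy\<in>V \<times> V. (?w j zy)\<^sup>2) * (\<Sum>zy\<in>V \<times> V. (?w (Suc (Suc j)) zy)\<^sup>2)"
    by (rule Cauchy_Schwarz_ineq_sum)
  also have "\<dots> = hom_even V E j * hom_even V E (Suc (Suc j))"
    by (simp add: hom_even_eq_sum_walks_sq[OF G] sum.cartesian_product case_prod_beta)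
  finally show ?thesis .
qed

section \<open>Rotations of cycles\<close>

definition rotate_cycle :: "nat \<Rightarrow> nat \<Rightarrow> (nat \<Rightarrow> 'a) \<Rightarrow> nat \<Rightarrow> 'a" where
  "rotate_cycle n r x = (\<lambda>i\<in>{0..<n}. x ((i + r) mod n))"

definition alternating :: "nat \<Rightarrow> 'a set \<Rightarrow> 'a set \<Rightarrow> (nat \<Rightarrow> 'a) \<Rightarrow> bool" where
  "alternating n A B x \<longleftrightarrow> (\<forall>i<n. x i \<in> (if even i then A else B))"

lemma rotate_cycle_in_hom_cycles:
  assumes x: "x \<in> hom_cycles V E n"
  shows "rotate_cycle n r x \<in> hom_cycles V E n"
proof -
  have "E (x ((i + r) mod n)) (x ((Suc i mod n + r) mod n))" if "i < n" for i
  proof -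
    have "(Suc i mod n + r) mod n = Suc ((i + r) mod n) mod n" by (simp add: mod_Suc_eq mod_add_left_eq)
    then show ?thesis using hom_cyclesD(2)[OF x, of "(i + r) mod n"] that by simp
  qed
  then show ?thesis using hom_cyclesD(1)[OF x] by (auto simp: hom_cycles_def rotate_cycle_def)
qed

lemma rotate_cycle_inverse:
  assumes "x \<in> hom_cycles V E n" and "r \<le> n"
  shows "rotate_cycle n (n - r) (rotate_cycle n r x) = x"
proof
  fix i
  show "rotate_cycle n (n - r) (rotate_cycle n r x) i = x i"
  proof (cases "i < n")
    case True
    have "((i + (n - r)) mod n + r) mod n = (i + n) mod n" using \<open>r \<le> n\<close> by (simp add: mod_add_left_eq)
    then show ?thesis using True by (simp add: rotate_cycle_def)
  next
    case False
    have x: "x \<in> {0..<n} \<rightarrow>\<^sub>E V" using assms(1) by (simp add: hom_cycles_def)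
    show ?thesis using PiE_arb[OF x, of i] False by (simp add: rotate_cycle_def)
  qed
qed

lemma inj_on_rotate_cycle: "r \<le> n \<Longrightarrow> inj_on (rotate_cycle n r) (hom_cycles V E n)"
  by (rule inj_on_inverseI[where g = "rotate_cycle n (n - r)"]) (rule rotate_cycle_inverse)

lemma alternating_rotate_cycle:
  assumes "even n" and x: "alternating n A B x"
  shows "alternating n (if even r then A else B) (if even r then B else A) (rotate_cycle n r x)"
  unfolding alternating_def
proof (intro allI impI)
  fix i assume "i < n"
  then have "x ((i + r) mod n) \<in> (if even ((i + r) mod n) then A else B)"
    using x by (simp add: alternating_def)
  moreover have "even ((i + r) mod n) \<longleftrightarrow> even (i + r)" using \<open>even n\<close> by (simp add: dvd_mod_iff)
  ultimately show "rotate_cycle n r x i \<in> (if even i then if even r then A else B else if even r then B else A)"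
    using \<open>i < n\<close> by (auto simp: rotate_cycle_def)
qed

lemma alternating_consecutive:
  assumes "alternating n A B x" and "Suc i < n"
  shows "x i \<in> A \<and> x (Suc i) \<in> B \<or> x i \<in> B \<and> x (Suc i) \<in> A"
  using assms(1)[unfolded alternating_def, rule_format, of i] assms(1)[unfolded alternating_def, rule_format, of "Suc i"]
    assms(2) by (cases "even i") auto

lemma rotation_onto_pair:
  fixes a b k :: nat
  assumes "a < b" "b < 2 * k"
  obtains r t where "t < k" "{(t + r) mod (2 * k), (k + r) mod (2 * k)} = {a, b}"
  \<comment> \<open>move b to position k if b - a \<le> k, and a otherwise\<close>
proof (cases "b - a \<le> k")
  case True
  have "k - (b - a) + (b + k) = a + 2 * k" "k + (b + k) = b + 2 * k" using True assms by simp_all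
  then have "(k - (b - a) + (b + k)) mod (2 * k) = a" "(k + (b + k)) mod (2 * k) = b"
    using assms by (simp_all only: mod_add_self2) simp_all
  then show ?thesis using that[of "k - (b - a)" "b + k"] assms by auto
next
  case False
  have "b - a - k + (a + k) = b" "k + (a + k) = a + 2 * k" using False assms by simp_all
  then have "(b - a - k + (a + k)) mod (2 * k) = b" "(k + (a + k)) mod (2 * k) = a"
    using assms by (simp_all only: mod_add_self2) simp_all
  then show ?thesis using that[of "b - a - k" "a + k"] assms False by (auto simp: insert_commute)
qed

section \<open>Anchored cycles\<close>

definition anchored_cycles ::
    "'a set \<Rightarrow> ('a \<Rightarrow> 'a \<Rightarrow> bool) \<Rightarrow> ('a \<Rightarrow> 'a \<Rightarrow> bool) \<Rightarrow> nat \<Rightarrow> 'a set \<Rightarrow> 'a set \<Rightarrow> (nat \<Rightarrow> 'a) set" where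
  "anchored_cycles V E rel k A B =
     {x \<in> hom_cycles V E (2 * k). x (k - 1) \<in> A \<and> x k \<in> B \<and> (\<exists>t<k. rel (x t) (x k))}"

definition bad_cycles ::
    "'a set \<Rightarrow> ('a \<Rightarrow> 'a \<Rightarrow> bool) \<Rightarrow> ('a \<Rightarrow> 'a \<Rightarrow> bool) \<Rightarrow> nat \<Rightarrow> 'a set \<Rightarrow> 'a set \<Rightarrow> (nat \<Rightarrow> 'a) set" where
  "bad_cycles V E rel k A B =
     {x \<in> hom_cycles V E (2 * k). (alternating (2 * k) A B x \<or> alternating (2 * k) B A x)
        \<and> (\<exists>i<2 * k. \<exists>j<2 * k. i \<noteq> j \<and> rel (x i) (x j))}"

lemma rotate_bad_cycle_into_anchored_cycles:
  assumes rel_sym: "\<forall>u\<in>V. \<forall>v\<in>V. rel u v \<longrightarrow> rel v u" and "1 \<le> k"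
    and x: "x \<in> bad_cycles V E rel k A B"
  obtains r where "r < 2 * k"
    and "rotate_cycle (2 * k) r x \<in> anchored_cycles V E rel k A B \<union> anchored_cycles V E rel k B A"
proof -
  let ?n = "2 * k"
  obtain i j where ij: "i < ?n" "j < ?n" "i \<noteq> j" "rel (x i) (x j)" and xc: "x \<in> hom_cycles V E ?n"
    and alt: "alternating ?n A B x \<or> alternating ?n B A x"
    using x by (auto simp: bad_cycles_def)
  have "rel (x j) (x i)" using rel_sym hom_cyclesD(1)[OF xc] ij by blast
  then have rel_min_max: "rel (x (min i j)) (x (max i j)) \<and> rel (x (max i j)) (x (min i j))"
    using ij(3,4) by (cases "i < j") (simp_all add: min_def max_def)
  have "min i j < max i j" "max i j < ?n" using ij by auto
  then obtain r t where "t < k" and tr: "{(t + r) mod ?n, (k + r) mod ?n} = {min i j, max i j}"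
    by (rule rotation_onto_pair)
  define y where "y = rotate_cycle ?n (r mod ?n) x"
  have y: "y s = x ((s + r) mod ?n)" if "s < ?n" for s
    using that by (simp add: y_def rotate_cycle_def mod_add_right_eq)
  have "rel (y t) (y k)"
    using tr rel_min_max y[of t] y[of k] \<open>t < k\<close> ij(3) by (auto simp: doubleton_eq_iff min_def max_def)
  moreover obtain A' B' where AB': "{A', B'} = {A, B}" and "alternating ?n A' B' x"
    using alt insert_commute by blast
  then have "alternating ?n (if even (r mod ?n) then A' else B') (if even (r mod ?n) then B' else A') y"
    unfolding y_def by (intro alternating_rotate_cycle) simp_all
  then have "y (k - 1) \<in> A \<and> y k \<in> B \<or> y (k - 1) \<in> B \<and> y k \<in> A"
    using alternating_consecutive[of ?n _ _ y "k - 1"] AB' \<open>1 \<le> k\<close>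
    by (cases "even (r mod ?n)") (auto simp: doubleton_eq_iff)
  moreover have "y \<in> hom_cycles V E ?n" unfolding y_def by (rule rotate_cycle_in_hom_cycles[OF xc])
  ultimately have "y \<in> anchored_cycles V E rel k A B \<union> anchored_cycles V E rel k B A"
    using \<open>t < k\<close> by (auto simp: anchored_cycles_def)
  then show ?thesis using that[of "r mod ?n"] \<open>1 \<le> k\<close> by (simp add: y_def)
qed

lemma card_bad_cycles_le:
  assumes G: "graph V E" and rel_sym: "\<forall>u\<in>V. \<forall>v\<in>V. rel u v \<longrightarrow> rel v u" and "1 \<le> k"
  shows "card (bad_cycles V E rel k A B)
    \<le> 2 * k * (card (anchored_cycles V E rel k A B) + card (anchored_cycles V E rel k B A))"
proof -
  let ?n = "2 * k" and ?D = "anchored_cycles V E rel k A B \<union> anchored_cycles V E rel k B A"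
  let ?C = "\<lambda>r. rotate_cycle ?n r -` ?D \<inter> hom_cycles V E ?n"
  have fin: "finite (hom_cycles V E ?n)" using G finite_hom_cycles by (auto simp: graph_def)
  then have fin_D: "finite ?D" by (rule finite_subset[rotated]) (auto simp: anchored_cycles_def)
  have "bad_cycles V E rel k A B \<subseteq> (\<Union>r<?n. ?C r)"
  proof
    fix x assume x: "x \<in> bad_cycles V E rel k A B"
    then obtain r where "r < ?n" "rotate_cycle ?n r x \<in> ?D"
      by (rule rotate_bad_cycle_into_anchored_cycles[OF rel_sym \<open>1 \<le> k\<close>])
    moreover have "x \<in> hom_cycles V E ?n" using x by (simp add: bad_cycles_def)
    ultimately show "x \<in> (\<Union>r<?n. ?C r)" by blast
  qed
  then have "card (bad_cycles V E rel k A B) \<le> card (\<Union>r<?n. ?C r)"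
    using fin by (intro card_mono) auto
  also have "\<dots> \<le> (\<Sum>r<?n. card (?C r))" by (rule card_UN_le) simp
  also have "\<dots> \<le> (\<Sum>r<?n. card ?D)"
  proof (intro sum_mono card_inj_on_le[OF _ _ fin_D])
    fix r assume "r \<in> {..<?n}"
    then show "inj_on (rotate_cycle ?n r) (?C r)"
      by (intro inj_on_subset[OF inj_on_rotate_cycle]) auto
  qed auto
  also have "\<dots> \<le> ?n * (card (anchored_cycles V E rel k A B) + card (anchored_cycles V E rel k B A))"
    by (simp add: card_Un_le)
  finally show ?thesis .
qed

lemma card_anchored_cycles_le_sum:
  assumes G: "graph V E" and "1 \<le> k" and "A \<subseteq> V" "B \<subseteq> V"
  shows "real (card (anchored_cycles V E rel k A B))
    \<le> (\<Sum>z\<in>V. \<Sum>v\<in>A. \<Sum>p\<in>walks V E (k - 1) z v.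
          \<Sum>w\<in>{w\<in>B. E v w \<and> (\<exists>t<k. rel (p t) w)}. real (card (walks V E k z w)))"
proof -
  have sym: "\<And>a b. E a b \<Longrightarrow> E b a" and fin: "finite V" using G by (auto simp: graph_def)
  have fin_AB: "finite A" "finite B" using assms(3,4) fin finite_subset by auto
  define T where "T = (SIGMA z:V. SIGMA v:A. SIGMA p:walks V E (k - 1) z v.
    SIGMA w:{w\<in>B. E v w \<and> (\<exists>t<k. rel (p t) w)}. walks V E k z w)"
  define \<phi> where "\<phi> x = (x 0, x (k - 1), restrict x {0..k - 1}, x k, reversed_tail (2 * k) k x)"
    for x :: "nat \<Rightarrow> 'a"
  have "inj_on (\<lambda>x. (restrict x {0..k - 1}, reversed_tail (2 * k) k x)) (anchored_cycles V E rel k A B)"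
    using \<open>1 \<le> k\<close> by (intro inj_on_subset[OF inj_on_restrict_reversed_tail]) (auto simp: anchored_cycles_def)
  then have "inj_on \<phi> (anchored_cycles V E rel k A B)" by (auto simp: inj_on_def \<phi>_def)
  moreover have "\<phi> ` anchored_cycles V E rel k A B \<subseteq> T"
  proof
    fix t assume "t \<in> \<phi> ` anchored_cycles V E rel k A B"
    then obtain x where t: "t = \<phi> x" and x: "x \<in> hom_cycles V E (2 * k)"
      and x_AB: "x (k - 1) \<in> A" "x k \<in> B" "\<exists>t<k. rel (x t) (x k)"
      by (auto simp: anchored_cycles_def)
    have "E (x (k - 1)) (x k)" using hom_cyclesD(2)[OF x, of "k - 1"] \<open>1 \<le> k\<close> by simp
    moreover have "(2 * k - k) mod (2 * k) = k" using \<open>1 \<le> k\<close> by simp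
    ultimately show "t \<in> T"
      using restrict_hom_cycle_in_walks[OF x, of "k - 1"] reversed_tail_in_walks[OF sym x, of k]
        hom_cyclesD(1)[OF x, of 0] x_AB \<open>1 \<le> k\<close> by (auto simp: T_def t \<phi>_def)
  qed
  moreover have "finite T" unfolding T_def using fin fin_AB by (intro finite_SigmaI) (auto simp: finite_walks)
  ultimately have "card (anchored_cycles V E rel k A B) \<le> card T" by (rule card_inj_on_le)
  also have "card T = (\<Sum>z\<in>V. \<Sum>v\<in>A. \<Sum>p\<in>walks V E (k - 1) z v.
          \<Sum>w\<in>{w\<in>B. E v w \<and> (\<exists>t<k. rel (p t) w)}. card (walks V E k z w))"
    unfolding T_def using fin fin_AB by (simp add: card_SigmaI finite_walks finite_SigmaI)
  finally show ?thesis by (simp flip: of_nat_sum)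
qed

lemma card_related_neighbours_le:
  assumes rel_deg: "\<forall>u\<in>V. \<forall>v\<in>A. card {w\<in>B. E v w \<and> rel u w} \<le> s"
    and "v \<in> A" and "\<And>t. t < k \<Longrightarrow> p t \<in> V"
  shows "card {w\<in>B. E v w \<and> (\<exists>t<k. rel (p t) w)} \<le> k * s"
proof -
  have "{w\<in>B. E v w \<and> (\<exists>t<k. rel (p t) w)} = (\<Union>t<k. {w\<in>B. E v w \<and> rel (p t) w})" by auto
  then have "card {w\<in>B. E v w \<and> (\<exists>t<k. rel (p t) w)} \<le> (\<Sum>t<k. card {w\<in>B. E v w \<and> rel (p t) w})"
    by (simp add: card_UN_le)
  also have "\<dots> \<le> (\<Sum>t<k. s)" using assms by (intro sum_mono) auto
  finally show ?thesis by simp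
qed

lemma sum_walks_sq_over_neighbourhoods_le:
  assumes G: "graph V E" and "A \<subseteq> V" "B \<subseteq> V" and deg: "\<forall>w\<in>B. card {v\<in>A. E w v} \<le> \<Delta>"
  shows "(\<Sum>z\<in>V. \<Sum>v\<in>A. \<Sum>w\<in>{w\<in>B. E v w}. (real (card (walks V E m z w)))\<^sup>2) \<le> \<Delta> * hom_even V E m"
proof -
  have sym: "\<And>a b. E a b \<Longrightarrow> E b a" and fin: "finite V" using G by (auto simp: graph_def)
  have fin_AB: "finite A" "finite B" using assms(2,3) fin finite_subset by auto
  let ?R = "\<lambda>z w. real (card (walks V E m z w))"
  have "(\<Sum>z\<in>V. \<Sum>v\<in>A. \<Sum>w\<in>{w\<in>B. E v w}. (?R z w)\<^sup>2) \<le> (\<Sum>z\<in>V. \<Delta> * (\<Sum>w\<in>B. (?R z w)\<^sup>2))"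
    using fin_AB sym deg by (intro sum_mono sum_neighbourhoods_le) auto
  also have "\<dots> \<le> (\<Sum>z\<in>V. \<Delta> * (\<Sum>w\<in>V. (?R z w)\<^sup>2))"
    using assms(3) fin by (intro sum_mono mult_left_mono sum_mono2) auto
  also have "\<dots> = \<Delta> * hom_even V E m"
    by (simp add: hom_even_eq_sum_walks_sq[OF G] sum_distrib_left)
  finally show ?thesis .
qed

lemma card_anchored_cycles_le:
  assumes G: "graph V E" and "1 \<le> k" and "A \<subseteq> V" "B \<subseteq> V"
    and rel_deg: "\<forall>u\<in>V. \<forall>v\<in>A. card {w\<in>B. E v w \<and> rel u w} \<le> s"
    and deg: "\<forall>w\<in>B. card {v\<in>A. E w v} \<le> \<Delta>"
  shows "real (card (anchored_cycles V E rel k A B))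
    \<le> sqrt (real k * real s) * sqrt (hom_even V E (k - 1)) * sqrt (real \<Delta> * hom_even V E k)"
proof -
  have fin: "finite V" "finite B" using G assms(4) finite_subset by (auto simp: graph_def)
  let ?P = "\<lambda>z v. real (card (walks V E (k - 1) z v))" and ?R = "\<lambda>z w. real (card (walks V E k z w))"
  define H where "H z v = sqrt (\<Sum>w\<in>{w\<in>B. E v w}. (?R z w)\<^sup>2)" for z v
  let ?c = "sqrt (real k * real s)"
  have extensions: "(\<Sum>w\<in>{w\<in>B. E v w \<and> (\<exists>t<k. rel (p t) w)}. ?R z w) \<le> ?c * H z v"
    if "v \<in> A" and p: "p \<in> walks V E (k - 1) z v" for z v p
  proof -
    have "p t \<in> V" if "t < k" for t using p that by (auto simp: walks_def PiE_iff)
    then have "card {w\<in>B. E v w \<and> (\<exists>t<k. rel (p t) w)} \<le> k * s"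
      using card_related_neighbours_le[OF rel_deg \<open>v \<in> A\<close>] by blast
    then show ?thesis unfolding H_def using fin
      by (intro sum_subset_le_sqrt_card_mult) (auto simp flip: of_nat_mult)
  qed
  have "real (card (anchored_cycles V E rel k A B))
      \<le> (\<Sum>z\<in>V. \<Sum>v\<in>A. \<Sum>p\<in>walks V E (k - 1) z v. ?c * H z v)"
    using card_anchored_cycles_le_sum[OF G \<open>1 \<le> k\<close> assms(3,4), of rel] extensions
    by (smt (verit) sum_mono)
  also have "\<dots> = ?c * (\<Sum>z\<in>V. \<Sum>v\<in>A. ?P z v * H z v)"
    by (simp add: sum_distrib_left ac_simps)
  also have "\<dots> \<le> ?c * (sqrt (\<Sum>(z, v)\<in>V \<times> A. (?P z v)\<^sup>2) * sqrt (\<Sum>(z, v)\<in>V \<times> A. (H z v)\<^sup>2))"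
    using sum_mult_le_sqrt_sum_squares[of "case_prod ?P" "case_prod H" "V \<times> A"]
    by (intro mult_left_mono) (simp_all add: sum.cartesian_product case_prod_beta)
  also have "\<dots> \<le> ?c * (sqrt (hom_even V E (k - 1)) * sqrt (real \<Delta> * hom_even V E k))"
  proof (intro mult_left_mono mult_mono real_sqrt_le_mono)
    have "(\<Sum>(z, v)\<in>V \<times> A. (?P z v)\<^sup>2) \<le> (\<Sum>(z, v)\<in>V \<times> V. (?P z v)\<^sup>2)"
      using assms(3) fin by (intro sum_mono2) auto
    then show "(\<Sum>(z, v)\<in>V \<times> A. (?P z v)\<^sup>2) \<le> hom_even V E (k - 1)"
      by (simp add: hom_even_eq_sum_walks_sq[OF G] sum.cartesian_product)
    show "(\<Sum>(z, v)\<in>V \<times> A. (H z v)\<^sup>2) \<le> real \<Delta> * hom_even V E k"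
      using sum_walks_sq_over_neighbourhoods_le[OF G assms(3,4) deg, of k]
      by (simp add: H_def sum.cartesian_product sum_nonneg)
  qed (auto simp: hom_even_def intro!: sum_nonneg)
  finally show ?thesis by (simp add: ac_simps)
qed

lemma hom_even_pos:
  assumes G: "graph V E" and "E a b"
  shows "0 < hom_even V E j"
proof (cases "j = 0")
  case True
  have "a \<in> V" "finite V" using G \<open>E a b\<close> by (auto simp: graph_def)
  then show ?thesis using True by (auto simp: hom_even_def hom_C_def card_gt_0_iff)
next
  case False
  have sym: "E b a" and "a \<in> V" "b \<in> V" "finite V" using G \<open>E a b\<close> by (auto simp: graph_def)
  define x where "x = (\<lambda>i\<in>{0..<2 * j}. if even i then a else b)"
  have "E (x i) (x (Suc i mod (2 * j)))" if "i < 2 * j" for i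
  proof (cases "Suc i = 2 * j")
    case True
    then have "odd i" by (metis even_Suc even_mult_iff even_numeral)
    then show ?thesis using True that sym False by (simp add: x_def)
  next
    case False
    then show ?thesis using that \<open>E a b\<close> sym by (simp add: x_def)
  qed
  then have "x \<in> hom_cycles V E (2 * j)"
    using \<open>a \<in> V\<close> \<open>b \<in> V\<close> by (auto simp: hom_cycles_def x_def)
  then show ?thesis using finite_hom_cycles[OF \<open>finite V\<close>] False
    by (auto simp: hom_even_def hom_C_def card_gt_0_iff)
qed

lemma card_bad_cycles_le_sqrt:
  assumes G: "graph V E" and rel_sym: "\<forall>u\<in>V. \<forall>v\<in>V. rel u v \<longrightarrow> rel v u" and "1 \<le> k"
    and "X1 \<subseteq> V" "X2 \<subseteq> V"
    and h1: "\<forall>u\<in>V. \<forall>v\<in>X1. card {w \<in> X2. E v w} \<le> \<Delta>1 \<and> card {w \<in> X2. E v w \<and> rel u w} \<le> s1"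
    and h2: "\<forall>u\<in>V. \<forall>v\<in>X2. card {w \<in> X1. E v w} \<le> \<Delta>2 \<and> card {w \<in> X1. E v w \<and> rel u w} \<le> s2"
  defines "M \<equiv> real (max (\<Delta>1 * s2) (\<Delta>2 * s1))"
  shows "real (card (bad_cycles V E rel k X1 X2))
    \<le> 4 * real k powr (3 / 2) * sqrt M * sqrt (hom_even V E (k - 1)) * sqrt (hom_even V E k)"
proof -
  let ?h = "sqrt (hom_even V E (k - 1)) * sqrt (hom_even V E k)"
  have anchored: "real (card (anchored_cycles V E rel k A B)) \<le> sqrt M * (sqrt k * ?h)"
    if "A \<subseteq> V" "B \<subseteq> V" "\<forall>u\<in>V. \<forall>v\<in>A. card {w\<in>B. E v w \<and> rel u w} \<le> s"
      and "\<forall>w\<in>B. card {v\<in>A. E w v} \<le> \<Delta>" and "s * \<Delta> \<le> max (\<Delta>1 * s2) (\<Delta>2 * s1)" for A B s \<Delta>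
  proof -
    have "sqrt (real s * real \<Delta>) \<le> sqrt M"
      using that(5) unfolding M_def by (simp flip: of_nat_mult)
    then have "sqrt (real s * real \<Delta>) * (sqrt k * ?h) \<le> sqrt M * (sqrt k * ?h)"
      by (rule mult_right_mono) (simp add: hom_even_def)
    moreover have "sqrt (real k * real s) * sqrt (hom_even V E (k - 1)) * sqrt (real \<Delta> * hom_even V E k)
        = sqrt (real s * real \<Delta>) * (sqrt k * ?h)"
      by (simp add: real_sqrt_mult ac_simps)
    ultimately show ?thesis using card_anchored_cycles_le[OF G \<open>1 \<le> k\<close> that(1-4)] by linarith
  qed
  have "real (card (bad_cycles V E rel k X1 X2))
      \<le> 2 * k * (real (card (anchored_cycles V E rel k X1 X2)) + card (anchored_cycles V E rel k X2 X1))"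
    using card_bad_cycles_le[OF G rel_sym \<open>1 \<le> k\<close>, of X1 X2] by (simp flip: of_nat_add of_nat_mult)
  also have "\<dots> \<le> 2 * k * (2 * (sqrt M * (sqrt k * ?h)))"
  proof -
    have "\<forall>w\<in>X2. card {v\<in>X1. E w v} \<le> \<Delta>2" "\<forall>w\<in>X1. card {v\<in>X2. E w v} \<le> \<Delta>1"
      using h1 h2 assms(4,5) by blast+
    then show ?thesis using anchored[of X1 X2 s1 \<Delta>2] anchored[of X2 X1 s2 \<Delta>1] assms(4,5) h1 h2
      by (intro mult_left_mono) (auto simp: mult.commute)
  qed
  also have "\<dots> = 4 * (real k * sqrt k) * sqrt M * ?h" by (simp add: ac_simps)
  also have "real k * sqrt k = real k powr (3 / 2)"
    using powr_add[of "real k" 1 "1 / 2"] \<open>1 \<le> k\<close> by (simp add: powr_half_sqrt)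
  finally show ?thesis by (simp add: ac_simps)
qed

theorem lemma2p4:
  fixes V :: "'a set" and E :: "'a \<Rightarrow> 'a \<Rightarrow> bool" and rel :: "'a \<Rightarrow> 'a \<Rightarrow> bool"
    and X1 X2 :: "'a set" and k l \<Delta>1 \<Delta>2 s1 s2 :: nat
  assumes "graph V E"
    and "2 \<le> k" and "l \<le> k - 1"
    and "X1 \<subseteq> V" and "X2 \<subseteq> V"
    and "\<forall>u\<in>V. \<forall>v\<in>V. rel u v \<longrightarrow> rel v u"
    and "\<forall>u\<in>V. \<forall>v\<in>X1. card {w \<in> X2. E v w} \<le> \<Delta>1 \<and> card {w \<in> X2. E v w \<and> rel u w} \<le> s1"
    and "\<forall>u\<in>V. \<forall>v\<in>X2. card {w \<in> X1. E v w} \<le> \<Delta>2 \<and> card {w \<in> X1. E v w \<and> rel u w} \<le> s2"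
  shows "real (card {x \<in> hom_cycles V E (2*k).
             ((\<forall>i<2*k. x i \<in> (if even i then X1 else X2)) \<or>
              (\<forall>i<2*k. x i \<in> (if even i then X2 else X1))) \<and>
             (\<exists>i<2*k. \<exists>j<2*k. i \<noteq> j \<and> rel (x i) (x j))})
         \<le> 32 * real k powr (3/2) * sqrt (real (max (\<Delta>1 * s2) (\<Delta>2 * s1)))
            * real (hom_C V E (2*l)) powr (1 / (2 * (real k - real l)))
            * real (hom_C V E (2*k)) powr (1 - 1 / (2 * (real k - real l)))"
proof -
  let ?c = "real k powr (3/2) * sqrt (real (max (\<Delta>1 * s2) (\<Delta>2 * s1)))"
  define \<alpha> where "\<alpha> = 1 / (2 * (real k - real l))"
  define h where "h = hom_even V E"
  have "real (card (bad_cycles V E rel k X1 X2)) \<le> 32 * ?c * (h l powr \<alpha> * h k powr (1 - \<alpha>))"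
  proof (cases "bad_cycles V E rel k X1 X2 = {}")
    case False
    then obtain x where x: "x \<in> hom_cycles V E (2 * k)" by (auto simp: bad_cycles_def)
    have "E (x 0) (x (Suc 0 mod (2 * k)))" using hom_cyclesD(2)[OF x, of 0] assms(2) by simp
    then have pos: "0 < h j" for j unfolding h_def by (rule hom_even_pos[OF assms(1)])
    have "real (card (bad_cycles V E rel k X1 X2)) \<le> 4 * ?c * (sqrt (h (k - 1)) * sqrt (h k))"
      using card_bad_cycles_le_sqrt[OF assms(1,6) _ assms(4,5,7,8)] assms(2) by (simp add: h_def ac_simps)
    also have "\<dots> \<le> 4 * ?c * (h l powr \<alpha> * h k powr (1 - \<alpha>))"
      using log_convex_sqrt_bound[of h, OF pos _, of l k] hom_even_log_convex[OF assms(1)] assms(2,3)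
      by (intro mult_left_mono) (auto simp: h_def \<alpha>_def)
    also have "\<dots> \<le> 32 * ?c * (h l powr \<alpha> * h k powr (1 - \<alpha>))"
      by (intro mult_right_mono) auto
    finally show ?thesis .
  qed (simp add: h_def hom_even_def)
  then show ?thesis by (simp add: bad_cycles_def alternating_def h_def hom_even_def \<alpha>_def ac_simps)
qed

end
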